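(* Let $X\in\mathbb{R}^{n\times d}$ with $n\ge2$, $y\in\mathbb{R}^n$, and let $g:\mathbb{R}^d\to(-\infty,\infty]$ be a proper lower semicontinuous convex function with $g(k\beta)=kg(\beta)$ for all $k\ge0$, $\beta\in\mathbb{R}^d$, such that there exists $\beta\in\mathrm{relint}(\mathrm{dom}(g))$ and $\frac12\|y-X\beta\|_2^2+g(\beta)$ attains its infimum. Let $D(\theta)=-\frac12\|\theta\|_2^2+y^\top\theta-g^\star(X^\top\theta)$. Let $\tilde\beta\in\mathbb{R}^d$ with $X\tilde\beta\ne0$ and $\tilde\theta\in\mathrm{dom}(D)$, and let \[ \mathcal{R}^{\mathrm{DS}}(\tilde\beta,\tilde\theta)=\Big\{\theta\ \Big|\ \Big\|\theta-\tfrac12(\tilde\theta+y)\Big\|_2^2\le\tfrac14\|\tilde\theta-y\|_2^2\ \land\ 0\le g(\tilde\beta)-\theta^\top X\tilde\beta\Big\}. \] Define \[ \alpha=\max\Big(0,\frac{1}{\|X\tilde\beta\|_2^2}\Big(\tfrac12(\tilde\theta+y)^\top X\tilde\beta-g(\tilde\beta)\Big)\Big),\quad \theta_c=\tfrac12(\tilde\theta+y)-\alpha X\tilde\beta,\quad r^2=\tfrac14\|\tilde\theta-y\|_2^2-\alpha^2\|X\tilde\beta\|_2^2. \] Then the minimum-radius Euclidean ball containing $\mathcal{R}^{\mathrm{DS}}(\tilde\beta,\tilde\theta)$ is $\mathcal{R}^{\mathrm{DE}}(\tilde\beta,\tilde\theta)=\{\theta\mid\|\theta-\theta_c\|_2^2\le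 r^2\}$.
   Context: $g^\star(v)=\sup_\beta v^\top\beta-g(\beta)$ is the Fenchel conjugate; $\mathrm{dom}(h)=\{z:|h(z)|<\infty\}$; $\mathrm{relint}$ is relative interior. *)

theory Defs
  imports "HOL-Analysis.Analysis" "HOL-Library.Extended_Real" "HOL-Library.Liminf_Limsup"
begin

definition proper_fun :: "('a \<Rightarrow> ereal) \<Rightarrow> bool" where
  "proper_fun g \<longleftrightarrow> (\<forall>x. g x \<noteq> -\<infinity>) \<and> (\<exists>x. g x \<noteq> \<infinity>)"

definition lsc_fun :: "('a::topological_space \<Rightarrow> ereal) \<Rightarrow> bool" where
  "lsc_fun g \<longleftrightarrow> (\<forall>x. g x \<le> Liminf (at x) g)"

definition convex_fun :: "('a::real_vector \<Rightarrow> ereal) \<Rightarrow> bool" where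
  "convex_fun g \<longleftrightarrow> convex {(x, t::real). g x \<le> ereal t}"

definition edom :: "('a \<Rightarrow> ereal) \<Rightarrow> 'a set" where
  "edom h = {z. \<bar>h z\<bar> < \<infinity>}"

definition fenchel_conj :: "('a::real_inner \<Rightarrow> ereal) \<Rightarrow> 'a \<Rightarrow> ereal" where
  "fenchel_conj g v = (SUP b. ereal (v \<bullet> b) - g b)"

definition dual_fun ::
  "real^'d^'n \<Rightarrow> real^'n \<Rightarrow> (real^'d \<Rightarrow> ereal) \<Rightarrow> real^'n \<Rightarrow> ereal" where
  "dual_fun X y g \<theta> =
     ereal (- (1/2) * (norm \<theta>)\<^sup>2 + y \<bullet> \<theta>) - fenchel_conj g (transpose X *v \<theta>)"

definition R_DS ::
  "real^'d^'n \<Rightarrow> real^'n \<Rightarrow> (real^'d \<Rightarrow> ereal) \<Rightarrow> real^'d \<Rightarrow> real^'n \<Rightarrow> (real^'n) set" where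
  "R_DS X y g bt tt = {\<theta>. (norm (\<theta> - (1/2) *\<^sub>R (tt + y)))\<^sup>2 \<le> (1/4) * (norm (tt - y))\<^sup>2
                          \<and> 0 \<le> g bt - ereal (\<theta> \<bullet> (X *v bt))}"

text \<open>alpha = max(0, (1/||X beta~||^2) (1/2 (theta~+y).X beta~ - g(beta~))), computed in the
  extended reals (it is -inf inside the max when g(beta~)=inf, giving alpha = 0).\<close>
definition alpha_DE ::
  "real^'d^'n \<Rightarrow> real^'n \<Rightarrow> (real^'d \<Rightarrow> ereal) \<Rightarrow> real^'d \<Rightarrow> real^'n \<Rightarrow> real" where
  "alpha_DE X y g bt tt = real_of_ereal (max 0
      (ereal (1 / (norm (X *v bt))\<^sup>2) * (ereal ((1/2) * ((tt + y) \<bullet> (X *v bt))) - g bt)))"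

definition center_DE ::
  "real^'d^'n \<Rightarrow> real^'n \<Rightarrow> (real^'d \<Rightarrow> ereal) \<Rightarrow> real^'d \<Rightarrow> real^'n \<Rightarrow> real^'n" where
  "center_DE X y g bt tt = (1/2) *\<^sub>R (tt + y) - alpha_DE X y g bt tt *\<^sub>R (X *v bt)"

definition radius2_DE ::
  "real^'d^'n \<Rightarrow> real^'n \<Rightarrow> (real^'d \<Rightarrow> ereal) \<Rightarrow> real^'d \<Rightarrow> real^'n \<Rightarrow> real" where
  "radius2_DE X y g bt tt = (1/4) * (norm (tt - y))\<^sup>2 - (alpha_DE X y g bt tt)\<^sup>2 * (norm (X *v bt))\<^sup>2"

definition is_min_ball :: "'a::real_normed_vector set \<Rightarrow> 'a \<Rightarrow> real \<Rightarrow> bool" where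
  "is_min_ball S c r2 \<longleftrightarrow>
     S \<subseteq> {\<theta>. (norm (\<theta> - c))\<^sup>2 \<le> r2} \<and>
     (\<forall>c' r2'. S \<subseteq> {\<theta>. (norm (\<theta> - c'))\<^sup>2 \<le> r2'} \<longrightarrow> r2 \<le> r2' \<and> (r2' = r2 \<longrightarrow> c' = c))"

end

theory Submission
  imports Defs
begin

text \<open>
  Writing \<open>a = X \<tilde>\<beta>\<close>, the region \<open>R\<^sup>D\<^sup>S\<close> is the ball \<open>B\<close> with diameter \<open>[\<tilde>\<theta>, y]\<close> cut by the
  half-space \<open>\<theta>\<^sup>T a \<le> g(\<tilde>\<beta>)\<close>, and it contains \<open>\<tilde>\<theta>\<close>: positive homogeneity makes \<open>g\<^sup>\<star>(v)\<close> infinite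
  whenever \<open>v\<^sup>T \<tilde>\<beta> > g(\<tilde>\<beta>)\<close>. If the centre of \<open>B\<close> lies in the half-space, \<open>B\<close> is the answer;
  otherwise the candidate ball is centred at the projection \<open>\<theta>\<^sub>c\<close> of that centre onto the hyperplane
  and has the sphere in which the hyperplane meets \<open>\<partial>B\<close> as a great sphere (Pythagoras). In both
  cases, as \<open>n \<ge> 2\<close>, the region contains two antipodal points \<open>\<theta>\<^sub>c \<plusminus> r u\<close> of the candidate, and by
  the parallelogram law every ball containing them has squared radius at least
  \<open>r\<^sup>2 + \<parallel>\<theta>\<^sub>c - c'\<parallel>\<^sup>2\<close>, where \<open>c'\<close> is its centre.
\<close>

lemma fenchel_conj_eq_PInf_if_pos_homogeneous:
  fixes g :: "'a::real_inner \<Rightarrow> ereal"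
  assumes homog: "\<And>k. k \<ge> 0 \<Longrightarrow> g (k *\<^sub>R b) = ereal k * g b"
    and less: "g b < ereal (v \<bullet> b)"
  shows "fenchel_conj g v = \<infinity>"
proof (rule ereal_top)
  fix B :: real
  have term_le: "ereal (v \<bullet> (k *\<^sub>R b)) - g (k *\<^sub>R b) \<le> fenchel_conj g v" for k
    unfolding fenchel_conj_def by (rule SUP_upper) simp
  show "ereal B \<le> fenchel_conj g v"
  proof (cases "g b")
    case (real \<gamma>)
    define k where "k = max 0 B / (v \<bullet> b - \<gamma>)"
    have "v \<bullet> b - \<gamma> > 0" using less real by simp
    then have "k \<ge> 0" and "B \<le> k * (v \<bullet> b - \<gamma>)" by (simp_all add: k_def)
    moreover have "ereal (v \<bullet> (k *\<^sub>R b)) - g (k *\<^sub>R b) = ereal (k * (v \<bullet> b - \<gamma>))"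
      using homog[OF \<open>k \<ge> 0\<close>] real by (simp add: algebra_simps)
    ultimately show ?thesis using term_le[of k] by (metis ereal_less_eq(3) order_trans)
  next
    case MInf
    then show ?thesis using term_le[of 1] homog[of 1] by simp
  next
    case PInf
    then show ?thesis using less by simp
  qed
qed

lemma is_min_ball_if_antipodal_points:
  fixes S :: "'a::real_inner set"
  assumes sub: "S \<subseteq> {t. (norm (t - c))\<^sup>2 \<le> r2}" and r2: "r2 \<ge> 0" and u: "norm u = 1"
    and plus: "c + sqrt r2 *\<^sub>R u \<in> S" and minus: "c - sqrt r2 *\<^sub>R u \<in> S"
  shows "is_min_ball S c r2"
  unfolding is_min_ball_def
proof (intro conjI allI impI sub)
  fix c' r2'
  assume sub': "S \<subseteq> {t. (norm (t - c'))\<^sup>2 \<le> r2'}"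
  define p where "p = c - c'"
  define w where "w = sqrt r2 *\<^sub>R u"
  have "(norm (p + w))\<^sup>2 \<le> r2'" and "(norm (p - w))\<^sup>2 \<le> r2'"
    using sub' plus minus by (auto simp: p_def w_def algebra_simps)
  moreover have "(norm (p + w))\<^sup>2 + (norm (p - w))\<^sup>2 = 2 * (norm p)\<^sup>2 + 2 * (norm w)\<^sup>2"
    by (simp add: power2_norm_eq_inner inner_add inner_diff inner_commute)
  moreover have "(norm w)\<^sup>2 = r2"
    using u r2 by (simp add: w_def power_mult_distrib)
  ultimately have key: "(norm p)\<^sup>2 + r2 \<le> r2'" by linarith
  then show "r2 \<le> r2'" using zero_le_power2[of "norm p"] by linarith
  assume "r2' = r2"
  with key show "c' = c" by (simp add: p_def)
qed

lemma is_min_ball_cball: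
  fixes c :: "'a::euclidean_space"
  assumes "r2 \<ge> 0"
  shows "is_min_ball {t. (norm (t - c))\<^sup>2 \<le> r2} c r2"
proof -
  obtain u :: 'a where "u \<in> Basis" using nonempty_Basis by blast
  then show ?thesis
    using assms by (intro is_min_ball_if_antipodal_points[where u = u]) auto
qed

lemma norm_diff_shift_sq:
  fixes t c a :: "'a::real_inner"
  shows "(norm (t - (c - \<alpha> *\<^sub>R a)))\<^sup>2
           = (norm (t - c))\<^sup>2 + 2 * \<alpha> * ((t - c) \<bullet> a) + \<alpha>\<^sup>2 * (norm a)\<^sup>2"
proof -
  have "t - (c - \<alpha> *\<^sub>R a) = (t - c) + \<alpha> *\<^sub>R a" by simp
  then show ?thesis
    by (simp only: power2_norm_eq_inner inner_add inner_scaleR_left inner_scaleR_right)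
      (simp add: inner_commute power2_eq_square algebra_simps)
qed

lemma is_min_ball_cball_inter_halfspace:
  fixes c0 a :: "'a::euclidean_space"
  assumes dim: "DIM('a) \<ge> 2" and a: "a \<noteq> 0"
    and S: "S = {t. (norm (t - c0))\<^sup>2 \<le> R2 \<and> t \<bullet> a \<le> \<gamma>}" and "S \<noteq> {}"
    and \<alpha>: "\<alpha> = max 0 ((c0 \<bullet> a - \<gamma>) / (norm a)\<^sup>2)"
  shows "is_min_ball S (c0 - \<alpha> *\<^sub>R a) (R2 - \<alpha>\<^sup>2 * (norm a)\<^sup>2)"
proof -
  define c where "c = c0 - \<alpha> *\<^sub>R a"
  define r2 where "r2 = R2 - \<alpha>\<^sup>2 * (norm a)\<^sup>2"
  have a_pos: "(norm a)\<^sup>2 > 0" using a by simp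
  have \<alpha>_nonneg: "\<alpha> \<ge> 0" by (simp add: \<alpha>)
  have c_a: "c \<bullet> a = c0 \<bullet> a - \<alpha> * (norm a)\<^sup>2"
    by (simp add: c_def inner_diff_left power2_norm_eq_inner)
  have c_a_le: "c \<bullet> a \<le> \<gamma>" and c_a_eq: "\<alpha> > 0 \<Longrightarrow> c \<bullet> a = \<gamma>"
  proof -
    consider "c0 \<bullet> a \<le> \<gamma>" "\<alpha> = 0" | "\<alpha> * (norm a)\<^sup>2 = c0 \<bullet> a - \<gamma>"
      using a_pos by (cases "c0 \<bullet> a \<le> \<gamma>") (auto simp: \<alpha> divide_nonpos_pos)
    then show "c \<bullet> a \<le> \<gamma>" and "\<alpha> > 0 \<Longrightarrow> c \<bullet> a = \<gamma>"
      by (cases; simp add: c_a)+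
  qed
  have sub: "S \<subseteq> {t. (norm (t - c))\<^sup>2 \<le> r2}"
  proof
    fix t assume "t \<in> S"
    then have t: "(norm (t - c0))\<^sup>2 \<le> R2" "t \<bullet> a \<le> \<gamma>" by (auto simp: S)
    have "\<alpha> * (t \<bullet> a - c \<bullet> a) \<le> 0"
      using t(2) c_a_eq \<alpha>_nonneg by (cases "\<alpha> > 0") (auto simp: mult_nonneg_nonpos)
    then have "2 * \<alpha> * ((t - c0) \<bullet> a) + 2 * (\<alpha>\<^sup>2 * (norm a)\<^sup>2) \<le> 0"
      unfolding c_a by (simp add: algebra_simps power2_eq_square)
    then show "t \<in> {t. (norm (t - c))\<^sup>2 \<le> r2}"
      using t(1) by (simp add: c_def r2_def norm_diff_shift_sq)
  qed
  have r2_nonneg: "r2 \<ge> 0"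
  proof -
    obtain t where "t \<in> S" using \<open>S \<noteq> {}\<close> by blast
    with sub have "(norm (t - c))\<^sup>2 \<le> r2" by blast
    then show ?thesis by (meson order_trans zero_le_power2)
  qed
  obtain w where "w \<noteq> 0" "orthogonal a w" using orthogonal_to_vector_exists[OF dim] by blast
  define u where "u = w /\<^sub>R norm w"
  have u: "norm u = 1" "u \<bullet> a = 0"
    using \<open>w \<noteq> 0\<close> \<open>orthogonal a w\<close> by (auto simp: u_def orthogonal_def inner_commute)
  have antipodal: "c + s *\<^sub>R u \<in> S" if "s\<^sup>2 = r2" for s
  proof -
    have "u \<bullet> u = 1" using u(1) by (simp add: norm_eq_1)
    then have pythagoras: "(norm (s *\<^sub>R u - \<alpha> *\<^sub>R a))\<^sup>2 = s\<^sup>2 + \<alpha>\<^sup>2 * (norm a)\<^sup>2"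
      using u(2) unfolding power2_norm_eq_inner
      by (simp add: inner_diff_left inner_diff_right inner_commute power2_eq_square)
    have "c + s *\<^sub>R u - c0 = s *\<^sub>R u - \<alpha> *\<^sub>R a" by (simp add: c_def)
    then have "(norm (c + s *\<^sub>R u - c0))\<^sup>2 = s\<^sup>2 + \<alpha>\<^sup>2 * (norm a)\<^sup>2"
      using pythagoras by (simp only:)
    moreover have "(c + s *\<^sub>R u) \<bullet> a \<le> \<gamma>"
      using u c_a_le by (simp add: inner_add_left)
    ultimately show ?thesis using that by (simp add: S r2_def)
  qed
  have "is_min_ball S c r2"
    using antipodal[of "sqrt r2"] antipodal[of "- sqrt r2"] r2_nonneg
    by (intro is_min_ball_if_antipodal_points[OF sub r2_nonneg u(1)]) auto
  then show ?thesis by (simp add: c_def r2_def)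
qed

lemma inner_le_if_in_edom_dual_fun:
  assumes homog: "\<And>k. k \<ge> 0 \<Longrightarrow> g (k *\<^sub>R b) = ereal k * g b"
    and dom: "\<theta> \<in> edom (dual_fun X y g)"
  shows "ereal (\<theta> \<bullet> (X *v b)) \<le> g b"
proof (rule ccontr)
  assume "\<not> ereal (\<theta> \<bullet> (X *v b)) \<le> g b"
  then have "g b < ereal ((transpose X *v \<theta>) \<bullet> b)" by (simp add: dot_lmul_matrix)
  then have "fenchel_conj g (transpose X *v \<theta>) = \<infinity>"
    using fenchel_conj_eq_PInf_if_pos_homogeneous[OF homog] by blast
  then show False using dom by (simp add: edom_def dual_fun_def)
qed

lemma R_DS_eq:
  "R_DS X y g bt tt = {\<theta>. (norm (\<theta> - (1/2) *\<^sub>R (tt + y)))\<^sup>2 \<le> (1/4) * (norm (tt - y))\<^sup>2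
                           \<and> ereal (\<theta> \<bullet> (X *v bt)) \<le> g bt}"
proof -
  have "0 \<le> \<gamma> - ereal x \<longleftrightarrow> ereal x \<le> \<gamma>" for \<gamma> x by (cases \<gamma>) auto
  then show ?thesis by (simp add: R_DS_def)
qed

lemma alpha_DE_real:
  assumes "g bt = ereal \<gamma>" and "X *v bt \<noteq> 0"
  shows "alpha_DE X y g bt tt
           = max 0 ((((1/2) *\<^sub>R (tt + y)) \<bullet> (X *v bt) - \<gamma>) / (norm (X *v bt))\<^sup>2)"
  using assms by (simp add: alpha_DE_def max_def divide_simps)

lemma alpha_DE_PInf:
  assumes "g bt = \<infinity>" and "X *v bt \<noteq> 0"
  shows "alpha_DE X y g bt tt = 0"
  using assms by (simp add: alpha_DE_def)

lemma mem_R_DS_self: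
  assumes homog: "\<And>k. k \<ge> 0 \<Longrightarrow> g (k *\<^sub>R bt) = ereal k * g bt"
    and dom: "tt \<in> edom (dual_fun X y g)"
  shows "tt \<in> R_DS X y g bt tt"
proof -
  have "tt - (1/2) *\<^sub>R (tt + y) = (1/2) *\<^sub>R (tt - y)" by (simp add: vec_eq_iff field_simps)
  then have "(norm (tt - (1/2) *\<^sub>R (tt + y)))\<^sup>2 = (1/4) * (norm (tt - y))\<^sup>2"
    by (simp add: power_mult_distrib power2_eq_square)
  then show ?thesis using inner_le_if_in_edom_dual_fun[OF homog dom] by (simp add: R_DS_eq)
qed

theorem theorem11:
  fixes X :: "real^'d^'n" and y :: "real^'n" and g :: "real^'d \<Rightarrow> ereal"
    and bt :: "real^'d" and tt :: "real^'n"
  assumes n2: "CARD('n) \<ge> 2"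
    and proper: "proper_fun g" and lsc: "lsc_fun g" and cvx: "convex_fun g"
    and homog: "\<And>k b. k \<ge> 0 \<Longrightarrow> g (k *\<^sub>R b) = ereal k * g b"
    and relint: "\<exists>b. b \<in> rel_interior (edom g)"
    and attains: "\<exists>b0. \<forall>b. ereal ((1/2) * (norm (y - X *v b0))\<^sup>2) + g b0
                              \<le> ereal ((1/2) * (norm (y - X *v b))\<^sup>2) + g b"
    and Xbt: "X *v bt \<noteq> 0"
    and tt_dom: "tt \<in> edom (dual_fun X y g)"
  shows "is_min_ball (R_DS X y g bt tt) (center_DE X y g bt tt) (radius2_DE X y g bt tt)"
proof -
  \<comment> \<open>Only the homogeneity of \<open>g\<close> and the finiteness of \<open>D(\<tilde>\<theta>)\<close> are needed.\<close>
  define c0 where "c0 = (1/2) *\<^sub>R (tt + y)"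
  define R2 where "R2 = (1/4) * (norm (tt - y))\<^sup>2"
  have R_DS: "R_DS X y g bt tt = {t. (norm (t - c0))\<^sup>2 \<le> R2 \<and> ereal (t \<bullet> (X *v bt)) \<le> g bt}"
    by (simp add: R_DS_eq c0_def R2_def)
  have tt_mem: "tt \<in> R_DS X y g bt tt" using mem_R_DS_self[OF homog tt_dom] .
  show ?thesis
  proof (cases "g bt")
    case (real \<gamma>)
    then have "R_DS X y g bt tt = {t. (norm (t - c0))\<^sup>2 \<le> R2 \<and> t \<bullet> (X *v bt) \<le> \<gamma>}"
      by (simp add: R_DS)
    with tt_mem show ?thesis
      unfolding center_DE_def radius2_DE_def alpha_DE_real[of g bt, OF real Xbt]
      by (intro is_min_ball_cball_inter_halfspace) (auto simp: n2 Xbt c0_def R2_def)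
  next
    case PInf
    then have "R_DS X y g bt tt = {t. (norm (t - c0))\<^sup>2 \<le> R2}" by (simp add: R_DS)
    moreover have "center_DE X y g bt tt = c0" and "radius2_DE X y g bt tt = R2"
      by (simp_all add: center_DE_def radius2_DE_def alpha_DE_PInf[of g bt, OF PInf Xbt] c0_def R2_def)
    moreover have "R2 \<ge> 0" by (simp add: R2_def)
    ultimately show ?thesis using is_min_ball_cball by metis
  next
    case MInf
    with tt_mem show ?thesis by (simp add: R_DS)
  qed
qed

end
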